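(* Let $r_1,r_2,r_3,L>0$ with $r_2>\max(r_1,r_3)$, let $m(y)=r_1\mathbf 1_{y<0}+r_2\mathbf 1_{0\le y<1}+r_3\mathbf 1_{y\ge1}$, let $c_A>2\sqrt{r_1}$, and let $c\in(2\sqrt{r_1},c_A)$, $\eta>0$, $S>0$, $R>1$, $\gamma>0$. Let $\lambda(c)=\frac12(c-\sqrt{c^2-4r_1})$. Let $\varphi_1^R$ be the principal Dirichlet eigenfunction on $(-R,R)$, i.e. the positive solution in $W^{2,1}((-R,R))$ of $-L^{-2}(\varphi_1^R)''-m\varphi_1^R=\lambda_1^R\varphi_1^R$ in $(-R,R)$ with $\varphi_1^R(\pm R)=0$, normalized by $\varphi_1^R(0)=1$ and extended by $0$ outside $(-R,R)$. For $x_0\in\mathbb{R}$ set $$P(t,x)=e^{-\lambda(c)(x-ct-x_0)}-Se^{-(\lambda(c)+\eta)(x-ct-x_0)},\qquad Q(t,x)=\gamma e^{-\lambda(c)(c_A-c)t}e^{-\frac{c_A(x-c_At)}{2}}\varphi_1^R\Big(\frac{x-c_At}{L}\Big).$$ Then there exists $x_0\in\mathbb{R}$ such that for all $t\ge0$ the equation $P(t,x)=Q(t,x)$ admits an isolated solution $X(t)\in\mathbb{R}$ such that: (a) $\partial_xP(t,X(t))<0$; (b) $\partial_xQ(t,X(t))>0$; (c) $c_At-RL<X(t)<c_At$; (d) $\frac{\ln S}{\eta}<\inf_{t\ge0}X(t)-ct-x_0$. Moreover, (e) $X\in\mathcal C^1([0,+\infty),(-RL,+\infty))$, and (f) $X(t)=c_At+O(1)$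 as $t\to+\infty$. *)

theory Defs
  imports "HOL-Analysis.Analysis" "HOL-Library.Landau_Symbols"
begin

definition mfun :: "real \<Rightarrow> real \<Rightarrow> real \<Rightarrow> real \<Rightarrow> real" where
  "mfun r1 r2 r3 y = (if y < 0 then r1 else if y < 1 then r2 else r3)"

definition lam :: "real \<Rightarrow> real \<Rightarrow> real" where
  "lam r1 c = (c - sqrt (c^2 - 4 * r1)) / 2"

definition Pfun :: "real \<Rightarrow> real \<Rightarrow> real \<Rightarrow> real \<Rightarrow> real \<Rightarrow> real \<Rightarrow> real \<Rightarrow> real" where
  "Pfun r1 c \<eta> S x0 t x =
     exp (- lam r1 c * (x - c * t - x0)) - S * exp (- (lam r1 c + \<eta>) * (x - c * t - x0))"

definition Qfun :: "real \<Rightarrow> real \<Rightarrow> real \<Rightarrow> real \<Rightarrow> real \<Rightarrow> (real \<Rightarrow> real) \<Rightarrow> real \<Rightarrow> real \<Rightarrow> real" where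
  "Qfun r1 c cA \<gamma> L \<phi> t x =
     \<gamma> * exp (- lam r1 c * (cA - c) * t) * exp (- cA * (x - cA * t) / 2) * \<phi> ((x - cA * t) / L)"

text \<open>phi is the principal Dirichlet eigenfunction on (-R,R) of
  -L^{-2} phi'' - m phi = lambda1 phi, positive, in W^{2,1} (i.e. C^1 on (-R,R) with phi''
  existing off the jump points 0 and 1 of m), phi(+-R)=0, phi(0)=1, extended by 0.\<close>
definition principal_eigenfunction ::
  "real \<Rightarrow> real \<Rightarrow> real \<Rightarrow> real \<Rightarrow> real \<Rightarrow> real \<Rightarrow> (real \<Rightarrow> real) \<Rightarrow> bool" where
  "principal_eigenfunction r1 r2 r3 L R lam1 \<phi> \<longleftrightarrow>
     continuous_on {-R..R} \<phi> \<and>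
     (\<forall>y. (y \<le> -R \<or> R \<le> y) \<longrightarrow> \<phi> y = 0) \<and>
     (\<forall>y\<in>{-R<..<R}. \<phi> y > 0) \<and>
     \<phi> 0 = 1 \<and>
     (\<exists>d\<phi> dd\<phi>.
        (\<forall>y\<in>{-R<..<R}. (\<phi> has_real_derivative d\<phi> y) (at y)) \<and>
        continuous_on {-R<..<R} d\<phi> \<and>
        (\<forall>y\<in>{-R<..<R} - {0, 1}.
            (d\<phi> has_real_derivative dd\<phi> y) (at y) \<and>
            - (dd\<phi> y) / L^2 - mfun r1 r2 r3 y * \<phi> y = lam1 * \<phi> y))"

end

(*
  Write X(t) = cA t + L Y(t). P and Q share the factor exp (-lambda(c) (x - c t)), so in the
  moving coordinate y the equation P = Q reads W(y) = exp (-eta (cA - c) t) with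
  W(y) = (1 - K G(y)) exp (eta (L y - x0)) / S, K = exp (-lambda(c) x0) and
  G(y) = gamma exp ((lambda(c) - cA/2) L y) phi(y).
  On (-R, 0) the eigenfunction solves phi'' = -L^2 (lam1 + r1) phi and vanishes at -R, so by a
  Riccati comparison phi'/phi tends to +infinity at -R. Near -R, phi is therefore steep: Q is
  increasing in x and G' > lambda(c) L G. On a window [ym, ys] close to -R with
  G(ym) = rho G(ys), and with x0 fixed by K G(ys) = 1, W decreases from a value above 1 to 0,
  so inverting W gives a C^1 curve Y(t) in (ym, ys); K G >= rho there makes P decreasing.
  Taking G(ys) small pushes x0 to -infinity, which gives the bound ln S / eta < X(t) - c t - x0.
*)

theory Submission
  imports Defs
begin

lemma has_real_derivative_nonzero_imp_isolated_value:
  fixes f :: "real \<Rightarrow> real"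
  assumes "(f has_real_derivative D) (at x)" "D \<noteq> 0"
  shows "\<exists>\<delta>>0. \<forall>y. 0 < \<bar>y - x\<bar> \<and> \<bar>y - x\<bar> < \<delta> \<longrightarrow> f y \<noteq> f x"
proof -
  have "\<forall>\<^sub>F y in at x. (f y - f x) / (y - x) \<noteq> 0"
    using assms unfolding has_field_derivative_iff
    by (intro tendsto_imp_eventually_ne) auto
  then obtain \<delta> where "\<delta> > 0" "\<forall>y. y \<noteq> x \<and> dist y x < \<delta> \<longrightarrow> (f y - f x) / (y - x) \<noteq> 0"
    unfolding eventually_at by blast
  then show ?thesis by (metis diff_self div_0 dist_real_def zero_less_abs_iff)
qed

lemma eventually_at_right_realE:
  fixes a :: real
  assumes "eventually P (at_right a)"
  obtains c where "a < c" "\<And>y. a < y \<Longrightarrow> y \<le> c \<Longrightarrow> P y"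
proof -
  obtain b where "a < b" "\<And>y. a < y \<Longrightarrow> y < b \<Longrightarrow> P y"
    using assms unfolding eventually_at_right_field by blast
  then show ?thesis using that[of "(a + b) / 2"] by simp
qed

lemma frequently_logderiv_gt_at_right:
  fixes \<phi> d\<phi> :: "real \<Rightarrow> real"
  assumes "a < b"
    and pos: "\<And>y. y \<in> {a<..<b} \<Longrightarrow> 0 < \<phi> y"
    and deriv: "\<And>y. y \<in> {a<..<b} \<Longrightarrow> (\<phi> has_real_derivative d\<phi> y) (at y)"
    and lim: "(\<phi> \<longlongrightarrow> 0) (at_right a)"
  shows "\<exists>\<^sub>F y in at_right a. N < d\<phi> y / \<phi> y"
proof (rule ccontr)
  assume "\<not> ?thesis"
  then have "\<forall>\<^sub>F y in at_right a. y \<in> {a<..<b} \<and> d\<phi> y / \<phi> y \<le> N"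
    using eventually_at_right_real[OF \<open>a < b\<close>]
    by (auto simp: not_frequently not_less elim: eventually_elim2)
  then obtain c where "a < c"
    and c: "\<And>y. a < y \<Longrightarrow> y \<le> c \<Longrightarrow> y \<in> {a<..<b} \<and> d\<phi> y / \<phi> y \<le> N"
    by (erule eventually_at_right_realE)
  \<comment> \<open>\<open>ln \<phi> y - N y\<close> is nonincreasing on \<open>(a, c]\<close>, so \<open>\<phi>\<close> stays above a positive bound there.\<close>
  define m where "m = \<phi> c * exp (- \<bar>N\<bar> * (c - a))"
  have lower: "m \<le> \<phi> y" if "a < y" "y \<le> c" for y
  proof -
    have "ln (\<phi> c) - N * c \<le> ln (\<phi> y) - N * y"
    proof (rule DERIV_nonpos_imp_nonincreasing[OF \<open>y \<le> c\<close>])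
      fix z assume "y \<le> z" "z \<le> c"
      with that c[of z] have "z \<in> {a<..<b}" "d\<phi> z / \<phi> z \<le> N" by auto
      then show "\<exists>D. ((\<lambda>z. ln (\<phi> z) - N * z) has_real_derivative D) (at z) \<and> D \<le> 0"
        using pos deriv by (auto intro!: exI derivative_eq_intros)
    qed
    then have "exp (ln (\<phi> c) + N * (y - c)) \<le> exp (ln (\<phi> y))"
      by (simp add: algebra_simps)
    then have "\<phi> c * exp (N * (y - c)) \<le> \<phi> y"
      using pos[of y] pos[of c] c[of y] c[of c] that \<open>a < c\<close> by (simp add: exp_add)
    moreover have "- \<bar>N\<bar> * (c - a) \<le> N * (y - c)"
    proof -
      have "\<bar>N * (y - c)\<bar> \<le> \<bar>N\<bar> * (c - a)"
        using that by (simp add: abs_mult mult_left_mono)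
      then show ?thesis by linarith
    qed
    ultimately show ?thesis
      using pos[of c] c[of c] \<open>a < c\<close> unfolding m_def by (smt (verit) mult_left_mono exp_le_cancel_iff)
  qed
  have "0 < m" using pos[of c] c[of c] \<open>a < c\<close> by (simp add: m_def)
  then have "\<forall>\<^sub>F y in at_right a. \<phi> y < m" using lim by (simp add: order_tendstoD(2))
  then have "\<forall>\<^sub>F y in at_right a. False"
    using eventually_at_right_real[OF \<open>a < c\<close>] by eventually_elim (use lower in force)
  then show False by simp
qed

lemma tendsto_0_at_right_attains:
  fixes f :: "real \<Rightarrow> real"
  assumes "a < b" "(f \<longlongrightarrow> 0) (at_right a)" "\<And>y. y \<in> {a<..b} \<Longrightarrow> isCont f y"
    and "0 < v" "v < f b"
  obtains y where "y \<in> {a<..<b}" "f y = v"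
proof -
  have "\<forall>\<^sub>F y in at_right a. y \<in> {a<..<b} \<and> f y < v"
    using eventually_at_right_real[OF \<open>a < b\<close>] order_tendstoD(2)[OF assms(2,4)]
    by (rule eventually_conj)
  then obtain ya where "a < ya" "ya < b" "f ya < v"
    using eventually_happens'[OF trivial_limit_at_right_real] by auto
  moreover have "continuous_on {ya..b} f"
    using \<open>a < ya\<close> assms(3) by (intro continuous_at_imp_continuous_on) auto
  ultimately obtain y where "ya \<le> y" "y \<le> b" "f y = v"
    using IVT'[of f ya v b] \<open>v < f b\<close> by auto
  with \<open>a < ya\<close> \<open>v < f b\<close> show ?thesis
    by (intro that[of y]) (auto simp: le_less)
qed

lemma logderiv_tendsto_at_top_at_right:
  fixes \<phi> d\<phi> dd\<phi> :: "real \<Rightarrow> real"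
  assumes "a < b"
    and pos: "\<And>y. y \<in> {a<..<b} \<Longrightarrow> 0 < \<phi> y"
    and deriv: "\<And>y. y \<in> {a<..<b} \<Longrightarrow> (\<phi> has_real_derivative d\<phi> y) (at y)"
    and deriv2: "\<And>y. y \<in> {a<..<b} \<Longrightarrow> (d\<phi> has_real_derivative dd\<phi> y) (at y)"
    and bound: "\<And>y. y \<in> {a<..<b} \<Longrightarrow> dd\<phi> y \<le> C * \<phi> y"
    and lim: "(\<phi> \<longlongrightarrow> 0) (at_right a)"
  shows "filterlim (\<lambda>y. d\<phi> y / \<phi> y) at_top (at_right a)"
  unfolding filterlim_at_top_dense
proof
  fix Z
  obtain \<xi> where \<xi>: "\<xi> \<in> {a<..<b}" "Z + \<bar>C\<bar> * (b - a) < d\<phi> \<xi> / \<phi> \<xi>"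
    using frequently_eventually_frequently[OF
        frequently_logderiv_gt_at_right[OF \<open>a < b\<close> pos deriv lim] eventually_at_right_real[OF \<open>a < b\<close>]]
    by (auto elim: frequentlyE)
  have "Z < d\<phi> y / \<phi> y" if "a < y" "y < \<xi>" for y
  proof -
    \<comment> \<open>Riccati: the log-derivative has derivative \<open>dd\<phi>/\<phi> - (d\<phi>/\<phi>)\<^sup>2 \<le> C\<close>.\<close>
    have "d\<phi> \<xi> / \<phi> \<xi> - C * \<xi> \<le> d\<phi> y / \<phi> y - C * y"
    proof (rule DERIV_nonpos_imp_nonincreasing[where f = "\<lambda>z. d\<phi> z / \<phi> z - C * z"])
      fix z assume "y \<le> z" "z \<le> \<xi>"
      then have z: "z \<in> {a<..<b}" using that \<xi> by auto
      show "\<exists>D. ((\<lambda>z. d\<phi> z / \<phi> z - C * z) has_real_derivative D) (at z) \<and> D \<le> 0"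
      proof (intro exI conjI)
        show "((\<lambda>z. d\<phi> z / \<phi> z - C * z) has_real_derivative
                dd\<phi> z / \<phi> z - (d\<phi> z / \<phi> z)\<^sup>2 - C) (at z)"
          using pos[OF z] deriv[OF z] deriv2[OF z]
          by (auto intro!: derivative_eq_intros simp: field_simps power2_eq_square)
        have "dd\<phi> z / \<phi> z \<le> C"
          using pos[OF z] bound[OF z] by (simp add: divide_le_eq)
        then show "dd\<phi> z / \<phi> z - (d\<phi> z / \<phi> z)\<^sup>2 - C \<le> 0"
          using zero_le_power2[of "d\<phi> z / \<phi> z"] by linarith
      qed
    qed (use that in simp)
    moreover have "\<bar>C * (\<xi> - y)\<bar> \<le> \<bar>C\<bar> * (b - a)"
      using that \<xi> by (simp add: abs_mult mult_left_mono)
    ultimately show ?thesis using \<xi> by (simp add: algebra_simps)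
  qed
  then show "\<forall>\<^sub>F y in at_right a. Z < d\<phi> y / \<phi> y"
    unfolding eventually_at_right_field using \<xi> by auto
qed

lemma decreasing_C1_inverse:
  fixes W dW :: "real \<Rightarrow> real"
  assumes "u < v"
    and deriv: "\<And>y. y \<in> {u..v} \<Longrightarrow> (W has_real_derivative dW y) (at y)"
    and neg: "\<And>y. y \<in> {u..v} \<Longrightarrow> dW y < 0"
    and cont: "continuous_on {u..v} dW"
  obtains g where "\<And>w. w \<in> {W v<..<W u} \<Longrightarrow> g w \<in> {u<..<v} \<and> W (g w) = w"
    and "\<And>w. w \<in> {W v<..<W u} \<Longrightarrow> (g has_real_derivative inverse (dW (g w))) (at w)"
    and "continuous_on {W v<..<W u} (\<lambda>w. inverse (dW (g w)))"
proof -
  have W_cont: "continuous_on {u..v} W"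
    by (rule DERIV_atLeastAtMost_imp_continuous_on) (use deriv in auto)
  have W_dec: "W y < W x" if "u \<le> x" "x < y" "y \<le> v" for x y
    using DERIV_neg_imp_decreasing[of x y W] deriv neg that by force
  then have "inj_on W {u..v}"
    by (intro inj_onI) (metis atLeastAtMost_iff less_irrefl linorder_neqE_linordered_idom)
  define g where "g = inv_into {u..v} W"
  have W_image: "W ` {u..v} = {W v..W u}"
  proof
    show "W ` {u..v} \<subseteq> {W v..W u}"
      using W_dec \<open>u < v\<close> by (force simp: le_less)
    show "{W v..W u} \<subseteq> W ` {u..v}"
      using IVT2'[of W v _ u] W_cont \<open>u < v\<close> by force
  qed
  have g: "g w \<in> {u..v} \<and> W (g w) = w" if "w \<in> {W v..W u}" for w
    using that W_image by (metis g_def inv_into_into f_inv_into_f)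
  have g_open: "g w \<in> {u<..<v} \<and> W (g w) = w" if "w \<in> {W v<..<W u}" for w
    using g[of w] that by (auto simp: less_le)
  have "continuous_on {W v..W u} g"
    using continuous_on_inv[OF W_cont compact_Icc] \<open>inj_on W {u..v}\<close> W_image
    by (simp add: g_def)
  then have g_cont: "continuous_on {W v<..<W u} g"
    by (rule continuous_on_subset) auto
  show ?thesis
  proof
    show "g w \<in> {u<..<v} \<and> W (g w) = w" if "w \<in> {W v<..<W u}" for w
      using g_open that .
    show "(g has_real_derivative inverse (dW (g w))) (at w)" if "w \<in> {W v<..<W u}" for w
    proof (rule DERIV_inverse_function)
      have "g w \<in> {u..v}"
        using g_open[OF that] by auto
      then show "(W has_real_derivative dW (g w)) (at (g w))" "dW (g w) \<noteq> 0"
        using deriv neg by (auto simp: less_imp_neq)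
      show "isCont g w"
        using g_cont that by (simp add: continuous_on_eq_continuous_at)
    qed (use that g_open in auto)
    have g_closed: "g w \<in> {u..v}" if "w \<in> {W v<..<W u}" for w
      using g_open[OF that] by auto
    then have "continuous_on {W v<..<W u} (dW \<circ> g)"
      by (intro continuous_on_compose g_cont continuous_on_subset[OF cont]) auto
    then show "continuous_on {W v<..<W u} (\<lambda>w. inverse (dW (g w)))"
      using g_closed neg by (intro continuous_on_inverse) (auto simp: less_imp_neq)
  qed
qed

lemma Pfun_has_real_derivative:
  "((\<lambda>x. Pfun r1 c \<eta> S x0 t x) has_real_derivative
      exp (- lam r1 c * (x - c * t - x0)) *
      ((lam r1 c + \<eta>) * S * exp (- \<eta> * (x - c * t - x0)) - lam r1 c)) (at x)"
proof -
  have "exp (- (lam r1 c + \<eta>) * (x - c * t - x0)) =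
      exp (- lam r1 c * (x - c * t - x0)) * exp (- \<eta> * (x - c * t - x0))"
    by (simp add: exp_add[symmetric] algebra_simps)
  then show ?thesis
    unfolding Pfun_def by (auto intro!: derivative_eq_intros simp: algebra_simps)
qed

lemma Qfun_has_real_derivative:
  assumes "L \<noteq> 0" and "(\<phi> has_real_derivative d\<phi>) (at ((x - cA * t) / L))"
  shows "((\<lambda>x. Qfun r1 c cA \<gamma> L \<phi> t x) has_real_derivative
      \<gamma> * exp (- lam r1 c * (cA - c) * t) * exp (- cA * (x - cA * t) / 2) *
      (d\<phi> / L - cA / 2 * \<phi> ((x - cA * t) / L))) (at x)"
proof -
  have "((\<lambda>x. (x - cA * t) / L) has_real_derivative 1 / L) (at x)"
    using assms(1) by (auto intro!: derivative_eq_intros)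
  from DERIV_chain2[OF assms(2) this]
  have "((\<lambda>x. \<phi> ((x - cA * t) / L)) has_real_derivative d\<phi> / L) (at x)"
    by simp
  then show ?thesis
    unfolding Qfun_def using assms(1)
    by (auto intro!: derivative_eq_intros simp: field_simps)
qed

lemma lam_pos:
  assumes "0 < r1" "2 * sqrt r1 < c"
  shows "0 < lam r1 c"
proof -
  have "0 < c"
    using assms real_sqrt_ge_zero[of r1] by linarith
  then have "sqrt (c\<^sup>2 - 4 * r1) < sqrt (c\<^sup>2)"
    using assms(1) by (intro real_sqrt_less_mono) simp
  with \<open>0 < c\<close> show ?thesis
    by (simp add: lam_def)
qed

lemma principal_eigenfunction_left_branch:
  assumes "principal_eigenfunction r1 r2 r3 L R lam1 \<phi>" "L \<noteq> 0" "0 < R"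
  obtains d\<phi> where "\<And>y. y \<in> {-R<..<0} \<Longrightarrow> 0 < \<phi> y"
    and "\<And>y. y \<in> {-R<..<0} \<Longrightarrow> (\<phi> has_real_derivative d\<phi> y) (at y)"
    and "continuous_on {-R<..<0} d\<phi>"
    and "(\<phi> \<longlongrightarrow> 0) (at_right (-R))"
    and "filterlim (\<lambda>y. d\<phi> y / \<phi> y) at_top (at_right (-R))"
proof -
  note eigen = assms(1)[unfolded principal_eigenfunction_def]
  have pos: "\<And>y. y \<in> {-R<..<R} \<Longrightarrow> 0 < \<phi> y"
    and cont: "continuous_on {-R..R} \<phi>" and "\<phi> (-R) = 0"
    using eigen by auto
  obtain d\<phi> dd\<phi> where deriv: "\<And>y. y \<in> {-R<..<R} \<Longrightarrow> (\<phi> has_real_derivative d\<phi> y) (at y)"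
    and d\<phi>_cont: "continuous_on {-R<..<R} d\<phi>"
    and ode: "\<And>y. y \<in> {-R<..<R} - {0, 1} \<Longrightarrow> (d\<phi> has_real_derivative dd\<phi> y) (at y) \<and>
      - dd\<phi> y / L\<^sup>2 - mfun r1 r2 r3 y * \<phi> y = lam1 * \<phi> y"
    using eigen by blast
  have left: "{-R<..<0} \<subseteq> {-R<..<R} - {0, 1}"
    by auto
  have lim: "(\<phi> \<longlongrightarrow> 0) (at_right (-R))"
    using continuous_on_Icc_at_rightD[OF cont] \<open>\<phi> (-R) = 0\<close> assms(3) by simp
  have ode_left: "dd\<phi> y = - (L\<^sup>2 * (lam1 + r1)) * \<phi> y" if "y \<in> {-R<..<0}" for y
    using ode[of y] that assms(2) by (auto simp: mfun_def field_simps)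
  have "filterlim (\<lambda>y. d\<phi> y / \<phi> y) at_top (at_right (-R))"
  proof (rule logderiv_tendsto_at_top_at_right[where dd\<phi> = dd\<phi> and C = "- (L\<^sup>2 * (lam1 + r1))"])
    fix y assume y: "y \<in> {-R<..<0}"
    with left have "y \<in> {-R<..<R} - {0, 1}"
      by blast
    then show "0 < \<phi> y" "(\<phi> has_real_derivative d\<phi> y) (at y)" "(d\<phi> has_real_derivative dd\<phi> y) (at y)"
      using pos deriv ode by auto
    show "dd\<phi> y \<le> - (L\<^sup>2 * (lam1 + r1)) * \<phi> y"
      using ode_left[OF y] by simp
  qed (use lim assms(3) in auto)
  moreover have "continuous_on {-R<..<0} d\<phi>"
    using d\<phi>_cont by (rule continuous_on_subset) auto
  ultimately show ?thesis
    using that[of d\<phi>] pos deriv lim assms(3) by auto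
qed

text \<open>Only the branch of \<open>\<phi>\<close> on \<open>(-R, 0)\<close> matters, and the eigenvalue equation enters only
  through the blow-up of the log-derivative at \<open>-R\<close>.\<close>

locale front_crossing =
  fixes r1 c cA \<eta> S \<gamma> L R :: real and \<phi> d\<phi> :: "real \<Rightarrow> real"
  assumes lam_pos: "0 < lam r1 c" and c_pos: "0 < c" and speeds: "c < cA"
    and \<eta>_pos: "0 < \<eta>" and S_pos: "0 < S" and \<gamma>_pos: "0 < \<gamma>"
    and L_pos: "0 < L" and R_pos: "0 < R"
    and \<phi>_pos: "\<And>y. y \<in> {-R<..<0} \<Longrightarrow> 0 < \<phi> y"
    and \<phi>_deriv: "\<And>y. y \<in> {-R<..<0} \<Longrightarrow> (\<phi> has_real_derivative d\<phi> y) (at y)"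
    and d\<phi>_cont: "continuous_on {-R<..<0} d\<phi>"
    and \<phi>_tendsto_0: "(\<phi> \<longlongrightarrow> 0) (at_right (-R))"
    and logderiv_at_top: "filterlim (\<lambda>y. d\<phi> y / \<phi> y) at_top (at_right (-R))"
begin

abbreviation lm :: real where "lm \<equiv> lam r1 c"

definition tilted :: "real \<Rightarrow> real" where
  "tilted y = \<gamma> * exp ((lm - cA / 2) * L * y) * \<phi> y"

definition tilted_deriv :: "real \<Rightarrow> real" where
  "tilted_deriv y = \<gamma> * exp ((lm - cA / 2) * L * y) * ((lm - cA / 2) * L * \<phi> y + d\<phi> y)"

lemma Qfun_moving_frame:
  "Qfun r1 c cA \<gamma> L \<phi> t (cA * t + L * y) = exp (- lm * ((cA - c) * t + L * y)) * tilted y"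
proof -
  have "exp (- lm * (cA - c) * t) * exp (- cA * (L * y) / 2) =
      exp (- lm * ((cA - c) * t + L * y)) * exp ((lm - cA / 2) * L * y)"
    by (simp add: exp_add[symmetric] algebra_simps)
  then show ?thesis
    using L_pos by (simp add: Qfun_def tilted_def)
qed

lemma tilted_pos: "y \<in> {-R<..<0} \<Longrightarrow> 0 < tilted y"
  using \<gamma>_pos \<phi>_pos by (simp add: tilted_def)

lemma tilted_has_real_derivative:
  "y \<in> {-R<..<0} \<Longrightarrow> (tilted has_real_derivative tilted_deriv y) (at y)"
  unfolding tilted_def[abs_def] tilted_deriv_def
  by (auto intro!: derivative_eq_intros \<phi>_deriv simp: algebra_simps)

lemma tilted_deriv_gt:
  assumes "y \<in> {-R<..<0}" "cA * L / 2 * \<phi> y < d\<phi> y"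
  shows "lm * L * tilted y < tilted_deriv y"
proof -
  have "lm * L * \<phi> y < (lm - cA / 2) * L * \<phi> y + d\<phi> y"
    using assms(2) by (simp add: algebra_simps)
  then show ?thesis
    using \<gamma>_pos by (simp add: tilted_def tilted_deriv_def mult.assoc mult.left_commute[of lm])
qed

lemma tilted_tendsto_0: "(tilted \<longlongrightarrow> 0) (at_right (-R))"
  unfolding tilted_def[abs_def]
  by (rule tendsto_eq_intros \<phi>_tendsto_0 | simp)+

lemma eventually_in_domain: "\<forall>\<^sub>F y in at_right (-R). y \<in> {-R<..<0}"
  using R_pos by (intro eventually_at_right_real) simp

lemma eventually_steep: "\<forall>\<^sub>F y in at_right (-R). cA * L / 2 * \<phi> y < d\<phi> y"
proof -
  have "\<forall>\<^sub>F y in at_right (-R). cA * L / 2 < d\<phi> y / \<phi> y"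
    using logderiv_at_top unfolding filterlim_at_top_dense by blast
  with eventually_in_domain show ?thesis
    by eventually_elim (use \<phi>_pos in \<open>auto simp: less_divide_eq\<close>)
qed

lemma tilted_mono:
  assumes "y \<le> z"
    and steep: "\<And>w. w \<in> {y..z} \<Longrightarrow> w \<in> {-R<..<0} \<and> cA * L / 2 * \<phi> w < d\<phi> w"
  shows "tilted y \<le> tilted z"
proof (rule DERIV_nonneg_imp_nondecreasing[OF \<open>y \<le> z\<close>])
  fix w assume "y \<le> w" "w \<le> z"
  then have w: "w \<in> {-R<..<0}" "cA * L / 2 * \<phi> w < d\<phi> w"
    using steep by auto
  have "0 < lm * L * tilted w"
    using lam_pos L_pos tilted_pos[OF w(1)] by simp
  then show "\<exists>D. (tilted has_real_derivative D) (at w) \<and> 0 \<le> D"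
    using tilted_has_real_derivative[OF w(1)] tilted_deriv_gt[OF w] by force
qed

lemma steep_window:
  assumes "0 < \<rho>" "\<rho> < 1" "0 < \<epsilon>"
  obtains ym ys where "-R < ym" "ym < ys" "ys < 0" "tilted ys < \<epsilon>" "tilted ym = \<rho> * tilted ys"
    and "\<And>y. y \<in> {ym..ys} \<Longrightarrow>
      cA * L / 2 * \<phi> y < d\<phi> y \<and> \<rho> * tilted ys \<le> tilted y \<and> tilted y \<le> tilted ys"
proof -
  have "\<forall>\<^sub>F y in at_right (-R). (y \<in> {-R<..<0} \<and> cA * L / 2 * \<phi> y < d\<phi> y) \<and> tilted y < \<epsilon>"
    using eventually_in_domain eventually_steep order_tendstoD(2)[OF tilted_tendsto_0 \<open>0 < \<epsilon>\<close>]
    by (intro eventually_conj)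
  then obtain ys where "-R < ys" and ys: "\<And>y. -R < y \<Longrightarrow> y \<le> ys \<Longrightarrow>
      (y \<in> {-R<..<0} \<and> cA * L / 2 * \<phi> y < d\<phi> y) \<and> tilted y < \<epsilon>"
    by (erule eventually_at_right_realE)
  have "0 < tilted ys"
    using ys[of ys] \<open>-R < ys\<close> tilted_pos by simp
  obtain ym where ym: "ym \<in> {-R<..<ys}" "tilted ym = \<rho> * tilted ys"
  proof (rule tendsto_0_at_right_attains[OF \<open>-R < ys\<close> tilted_tendsto_0, where v = "\<rho> * tilted ys"])
    show "isCont tilted y" if "y \<in> {-R<..ys}" for y
      using ys[of y] that tilted_has_real_derivative[THEN DERIV_isCont] by auto
  qed (use assms \<open>0 < tilted ys\<close> in auto)
  show ?thesis
  proof (rule that)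
    show "-R < ym" "ym < ys" "ys < 0" "tilted ys < \<epsilon>"
      using ym ys[of ys] \<open>-R < ys\<close> by auto
    fix y assume "y \<in> {ym..ys}"
    then show "cA * L / 2 * \<phi> y < d\<phi> y \<and> \<rho> * tilted ys \<le> tilted y \<and> tilted y \<le> tilted ys"
      using ys[of y] tilted_mono[of ym y] tilted_mono[of y ys] ys ym by auto
  qed (rule ym(2))
qed

text \<open>\<open>P = Q\<close> at \<open>x = cA t + L y\<close> exactly when \<open>crossing_level x0 y = exp (- \<eta> (cA - c) t)\<close>
  (lemma \<open>crossing_point\<close>); the crossing curve comes from inverting \<open>crossing_level x0\<close>
  on a window where it decreases from above \<open>1\<close> to \<open>0\<close>.\<close>

definition crossing_level :: "real \<Rightarrow> real \<Rightarrow> real" where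
  "crossing_level x0 y = (1 - exp (- lm * x0) * tilted y) * exp (\<eta> * (L * y - x0)) / S"

definition crossing_level_deriv :: "real \<Rightarrow> real \<Rightarrow> real" where
  "crossing_level_deriv x0 y =
     (\<eta> * L * (1 - exp (- lm * x0) * tilted y) - exp (- lm * x0) * tilted_deriv y) *
     exp (\<eta> * (L * y - x0)) / S"

lemma crossing_level_has_real_derivative:
  "y \<in> {-R<..<0} \<Longrightarrow> (crossing_level x0 has_real_derivative crossing_level_deriv x0 y) (at y)"
  unfolding crossing_level_def[abs_def] crossing_level_deriv_def
  using S_pos by (auto intro!: derivative_eq_intros tilted_has_real_derivative simp: field_simps)

lemma crossing_level_deriv_neg:
  assumes "y \<in> {-R<..<0}" "cA * L / 2 * \<phi> y < d\<phi> y"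
    and "\<eta> \<le> (lm + \<eta>) * exp (- lm * x0) * tilted y"
  shows "crossing_level_deriv x0 y < 0"
proof -
  define a where "a = exp (- lm * x0) * tilted y"
  define b where "b = exp (- lm * x0) * tilted_deriv y"
  have "lm * L * a < b"
    using tilted_deriv_gt[OF assms(1,2)] by (simp add: a_def b_def)
  moreover have "\<eta> * L \<le> (lm + \<eta>) * L * a"
    using mult_right_mono[OF assms(3), of L] L_pos by (simp add: a_def algebra_simps)
  ultimately have "\<eta> * L * (1 - a) - b < 0"
    by (simp add: algebra_simps)
  then show ?thesis
    using S_pos unfolding crossing_level_deriv_def a_def b_def
    by (intro divide_neg_pos mult_neg_pos) auto
qed

lemma crossing_level_deriv_continuous_on: "continuous_on {-R<..<0} (crossing_level_deriv x0)"
proof -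
  have "continuous_on {-R<..<0} \<phi>"
    by (rule continuous_at_imp_continuous_on) (blast intro: DERIV_isCont \<phi>_deriv)
  then show ?thesis
    unfolding crossing_level_deriv_def[abs_def] tilted_def tilted_deriv_def
    using d\<phi>_cont S_pos by (intro continuous_intros) auto
qed

lemma crossing_level_eqD:
  assumes "crossing_level x0 y = exp (- \<eta> * (cA - c) * t)"
  shows "S * exp (- \<eta> * (cA * t + L * y - c * t - x0)) = 1 - exp (- lm * x0) * tilted y"
proof -
  have "1 - exp (- lm * x0) * tilted y =
      (1 - exp (- lm * x0) * tilted y) * (exp (\<eta> * (L * y - x0)) * exp (- \<eta> * (L * y - x0)))"
    by (simp add: exp_add[symmetric] algebra_simps)
  also have "\<dots> = crossing_level x0 y * S * exp (- \<eta> * (L * y - x0))"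
    using S_pos by (simp add: crossing_level_def)
  also have "\<dots> = S * exp (- \<eta> * (cA * t + L * y - c * t - x0))"
    by (simp add: assms exp_add[symmetric] algebra_simps)
  finally show ?thesis ..
qed

lemma Qfun_increasing_at_steep_point:
  assumes y: "y \<in> {-R<..<0}" and steep: "cA * L / 2 * \<phi> y < d\<phi> y"
  obtains D where "((\<lambda>x. Qfun r1 c cA \<gamma> L \<phi> t x) has_real_derivative D) (at (cA * t + L * y))" "0 < D"
proof
  have "(cA * t + L * y - cA * t) / L = y"
    using L_pos by simp
  then show "((\<lambda>x. Qfun r1 c cA \<gamma> L \<phi> t x) has_real_derivative
      \<gamma> * exp (- lm * (cA - c) * t) * exp (- cA * (L * y) / 2) * (d\<phi> y / L - cA / 2 * \<phi> y))
      (at (cA * t + L * y))"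
    using Qfun_has_real_derivative[of L \<phi> "d\<phi> y" "cA * t + L * y" cA t] \<phi>_deriv[OF y] L_pos by simp
  have "0 < d\<phi> y / L - cA / 2 * \<phi> y"
    using steep L_pos by (simp add: less_divide_eq algebra_simps)
  then show "0 < \<gamma> * exp (- lm * (cA - c) * t) * exp (- cA * (L * y) / 2) * (d\<phi> y / L - cA / 2 * \<phi> y)"
    using \<gamma>_pos by simp
qed

lemma crossing_point:
  assumes y: "y \<in> {-R<..<0}"
    and level: "crossing_level x0 y = exp (- \<eta> * (cA - c) * t)"
    and steep: "cA * L / 2 * \<phi> y < d\<phi> y"
    and dominant: "\<eta> < (lm + \<eta>) * exp (- lm * x0) * tilted y"
  defines "x \<equiv> cA * t + L * y"
  shows "Pfun r1 c \<eta> S x0 t x = Qfun r1 c cA \<gamma> L \<phi> t x"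
    and "\<exists>D. ((\<lambda>x. Pfun r1 c \<eta> S x0 t x) has_real_derivative D) (at x) \<and> D < 0"
    and "\<exists>D. ((\<lambda>x. Qfun r1 c cA \<gamma> L \<phi> t x) has_real_derivative D) (at x) \<and> 0 < D"
    and "\<exists>\<delta>>0. \<forall>x'. 0 < \<bar>x' - x\<bar> \<and> \<bar>x' - x\<bar> < \<delta> \<longrightarrow>
      Pfun r1 c \<eta> S x0 t x' \<noteq> Qfun r1 c cA \<gamma> L \<phi> t x'"
proof -
  define s where "s = x - c * t - x0"
  define K where "K = exp (- lm * x0)"
  have split: "S * exp (- \<eta> * s) = 1 - K * tilted y"
    using crossing_level_eqD[OF level] by (simp add: s_def x_def K_def)
  have "Pfun r1 c \<eta> S x0 t x = exp (- lm * s) * (1 - S * exp (- \<eta> * s))"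
    by (simp add: Pfun_def s_def exp_add[symmetric] algebra_simps)
  also have "\<dots> = exp (- lm * s) * K * tilted y"
    by (simp only: split) simp
  also have "\<dots> = exp (- lm * (x - c * t)) * tilted y"
    by (simp add: K_def s_def exp_add[symmetric] algebra_simps)
  also have "\<dots> = Qfun r1 c cA \<gamma> L \<phi> t x"
    unfolding x_def Qfun_moving_frame by (simp add: algebra_simps)
  finally show PQ: "Pfun r1 c \<eta> S x0 t x = Qfun r1 c cA \<gamma> L \<phi> t x" .
  define DP where "DP = exp (- lm * s) * ((lm + \<eta>) * S * exp (- \<eta> * s) - lm)"
  have DP: "((\<lambda>x. Pfun r1 c \<eta> S x0 t x) has_real_derivative DP) (at x)"
    using Pfun_has_real_derivative unfolding DP_def s_def .
  have "(lm + \<eta>) * S * exp (- \<eta> * s) - lm = \<eta> - (lm + \<eta>) * K * tilted y"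
    by (simp only: mult.assoc split) (simp add: algebra_simps)
  then have "DP < 0"
    using dominant by (simp add: DP_def mult_pos_neg K_def)
  with DP show "\<exists>D. ((\<lambda>x. Pfun r1 c \<eta> S x0 t x) has_real_derivative D) (at x) \<and> D < 0"
    by blast
  obtain DQ where DQ: "((\<lambda>x. Qfun r1 c cA \<gamma> L \<phi> t x) has_real_derivative DQ) (at x)" "0 < DQ"
    using Qfun_increasing_at_steep_point[OF y steep] unfolding x_def .
  then show "\<exists>D. ((\<lambda>x. Qfun r1 c cA \<gamma> L \<phi> t x) has_real_derivative D) (at x) \<and> 0 < D"
    by blast
  have "((\<lambda>x. Pfun r1 c \<eta> S x0 t x - Qfun r1 c cA \<gamma> L \<phi> t x) has_real_derivative DP - DQ) (at x)"
    using DP DQ(1) by (rule DERIV_diff)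
  from has_real_derivative_nonzero_imp_isolated_value[OF this] PQ \<open>DP < 0\<close> DQ(2)
  show "\<exists>\<delta>>0. \<forall>x'. 0 < \<bar>x' - x\<bar> \<and> \<bar>x' - x\<bar> < \<delta> \<longrightarrow>
      Pfun r1 c \<eta> S x0 t x' \<noteq> Qfun r1 c cA \<gamma> L \<phi> t x'"
    by auto
qed

lemma crossing_level_at_window_ends:
  assumes "ys \<in> {-R<..<0}" "tilted ym = \<rho> * tilted ys" "\<rho> < 1"
    and "exp (lm * x0) = tilted ys" "ln (S / (1 - \<rho>)) < \<eta> * (L * ym - x0)"
  shows "crossing_level x0 ys = 0" "1 < crossing_level x0 ym"
proof -
  have K: "exp (- lm * x0) * tilted ys = 1"
    using assms(4) tilted_pos[OF assms(1)] by (simp add: exp_minus)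
  then show "crossing_level x0 ys = 0"
    by (simp add: crossing_level_def)
  have "S / (1 - \<rho>) < exp (\<eta> * (L * ym - x0))"
    using assms(5) S_pos \<open>\<rho> < 1\<close> by (metis exp_less_cancel_iff exp_ln divide_pos_pos diff_gt_0_iff_gt)
  moreover have "1 - exp (- lm * x0) * tilted ym = 1 - \<rho>"
    using K assms(2) by (simp add: mult.left_commute)
  ultimately show "1 < crossing_level x0 ym"
    using S_pos \<open>\<rho> < 1\<close> by (simp add: crossing_level_def divide_less_eq mult.commute)
qed

lemma crossing_window:
  obtains ym ys x0 where "-R < ym" "ym < ys" "ys < 0" "ln S / \<eta> < L * ym - x0"
    and "crossing_level x0 ys = 0" "1 < crossing_level x0 ym"
    and "\<And>y. y \<in> {ym..ys} \<Longrightarrow>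
      cA * L / 2 * \<phi> y < d\<phi> y \<and> \<eta> < (lm + \<eta>) * exp (- lm * x0) * tilted y"
proof -
  \<comment> \<open>Any \<open>\<rho>\<close> in \<open>(\<eta> / (lm + \<eta>), 1)\<close> keeps \<open>\<partial>\<^sub>xP < 0\<close> on the window; a small \<open>tilted ys\<close>
    makes \<open>x0\<close> very negative, which yields the bound by \<open>ln S / \<eta>\<close>.\<close>
  define \<rho> where "\<rho> = (lm + 2 * \<eta>) / (2 * (lm + \<eta>))"
  have \<rho>: "0 < \<rho>" "\<rho> < 1" "\<eta> < (lm + \<eta>) * \<rho>"
    using lam_pos \<eta>_pos by (auto simp: \<rho>_def field_simps add_pos_pos)
  define B where "B = ln (S / (1 - \<rho>)) / \<eta>"
  obtain ym ys where ym: "-R < ym" "ym < ys" "ys < 0" and ys: "tilted ys < exp (- lm * (B + R * L))"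
    and on_window: "\<And>y. y \<in> {ym..ys} \<Longrightarrow>
      cA * L / 2 * \<phi> y < d\<phi> y \<and> \<rho> * tilted ys \<le> tilted y \<and> tilted y \<le> tilted ys"
    and "tilted ym = \<rho> * tilted ys"
    using steep_window[OF \<rho>(1,2) exp_gt_zero] by blast
  have ys_pos: "0 < tilted ys"
    using tilted_pos ym by auto
  define x0 where "x0 = ln (tilted ys) / lm"
  have x0: "exp (lm * x0) = tilted ys"
    using lam_pos ys_pos by (simp add: x0_def)
  have "ln (tilted ys) < - lm * (B + R * L)"
    using ys ys_pos by (metis exp_gt_zero ln_exp ln_less_cancel_iff)
  then have "x0 < - (B + R * L)"
    unfolding x0_def pos_divide_less_eq[OF lam_pos] by (simp add: algebra_simps)
  moreover have "- (R * L) < L * ym"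
    using mult_strict_left_mono[OF \<open>-R < ym\<close> L_pos] by (simp add: mult.commute)
  ultimately have B_less: "B < L * ym - x0"
    by linarith
  have "ln S < ln (S / (1 - \<rho>))"
    using S_pos \<rho> by (simp add: less_divide_eq)
  then have "ln S / \<eta> < B"
    using \<eta>_pos by (simp add: B_def divide_strict_right_mono)
  show ?thesis
  proof (rule that[of ym ys x0])
    show "ln S / \<eta> < L * ym - x0"
      using \<open>ln S / \<eta> < B\<close> B_less by linarith
    have "ln (S / (1 - \<rho>)) < \<eta> * (L * ym - x0)"
      using B_less \<eta>_pos by (simp add: B_def divide_less_eq mult.commute)
    then show "crossing_level x0 ys = 0" "1 < crossing_level x0 ym"
      using crossing_level_at_window_ends[OF _ \<open>tilted ym = \<rho> * tilted ys\<close> \<rho>(2) x0] ym by auto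
    fix y assume "y \<in> {ym..ys}"
    with on_window have "cA * L / 2 * \<phi> y < d\<phi> y" "\<rho> \<le> exp (- lm * x0) * tilted y"
      using x0 ys_pos by (auto simp: exp_minus le_divide_eq inverse_eq_divide mult.commute)
    then show "cA * L / 2 * \<phi> y < d\<phi> y \<and> \<eta> < (lm + \<eta>) * exp (- lm * x0) * tilted y"
      using \<rho>(3) lam_pos \<eta>_pos by (smt (verit) mult.assoc mult_left_mono)
  qed (use ym in auto)
qed

lemma crossing_level_inverse:
  obtains ym x0 g where "-R < ym" "ln S / \<eta> < L * ym - x0"
    and "\<And>w. w \<in> {0<..1} \<Longrightarrow> g w \<in> {ym<..<0} \<and> crossing_level x0 (g w) = w \<and>
      cA * L / 2 * \<phi> (g w) < d\<phi> (g w) \<and> \<eta> < (lm + \<eta>) * exp (- lm * x0) * tilted (g w)"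
    and "\<And>w. w \<in> {0<..1} \<Longrightarrow> (g has_real_derivative inverse (crossing_level_deriv x0 (g w))) (at w)"
    and "continuous_on {0<..1} (\<lambda>w. inverse (crossing_level_deriv x0 (g w)))"
proof -
  obtain ym ys x0 where ym: "-R < ym" "ym < ys" "ys < 0" "ln S / \<eta> < L * ym - x0"
    and levels: "crossing_level x0 ys = 0" "1 < crossing_level x0 ym"
    and on_window: "\<And>y. y \<in> {ym..ys} \<Longrightarrow>
      cA * L / 2 * \<phi> y < d\<phi> y \<and> \<eta> < (lm + \<eta>) * exp (- lm * x0) * tilted y"
    using crossing_window by blast
  have window: "{ym..ys} \<subseteq> {-R<..<0}"
    using ym by auto
  obtain g where g: "\<And>w. w \<in> {0<..<crossing_level x0 ym} \<Longrightarrow>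
      g w \<in> {ym<..<ys} \<and> crossing_level x0 (g w) = w"
    and g_deriv: "\<And>w. w \<in> {0<..<crossing_level x0 ym} \<Longrightarrow>
      (g has_real_derivative inverse (crossing_level_deriv x0 (g w))) (at w)"
    and g_deriv_cont: "continuous_on {0<..<crossing_level x0 ym} (\<lambda>w. inverse (crossing_level_deriv x0 (g w)))"
  proof (rule decreasing_C1_inverse[of ym ys "crossing_level x0" "crossing_level_deriv x0"])
    show "(crossing_level x0 has_real_derivative crossing_level_deriv x0 y) (at y)"
      and "crossing_level_deriv x0 y < 0" if "y \<in> {ym..ys}" for y
      using that window on_window[OF that]
      by (auto intro!: crossing_level_has_real_derivative crossing_level_deriv_neg)
    show "continuous_on {ym..ys} (crossing_level_deriv x0)"
      using crossing_level_deriv_continuous_on window by (rule continuous_on_subset)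
  qed (use ym levels in auto)
  have unit: "{0<..1} \<subseteq> {0<..<crossing_level x0 ym}"
    using levels by auto
  show ?thesis
  proof (rule that[of ym x0 g])
    fix w :: real assume "w \<in> {0<..1}"
    with unit have w: "w \<in> {0<..<crossing_level x0 ym}"
      by blast
    have "g w \<in> {ym..ys}"
      using g[OF w] by auto
    then show "g w \<in> {ym<..<0} \<and> crossing_level x0 (g w) = w \<and>
        cA * L / 2 * \<phi> (g w) < d\<phi> (g w) \<and> \<eta> < (lm + \<eta>) * exp (- lm * x0) * tilted (g w)"
      and "(g has_real_derivative inverse (crossing_level_deriv x0 (g w))) (at w)"
      using g[OF w] on_window[of "g w"] ym g_deriv[OF w] by auto
  qed (use ym continuous_on_subset[OF g_deriv_cont unit] in auto)
qed

lemma crossing_curve_moving_frame: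
  obtains ym x0 Y dY where "-R < ym" "ln S / \<eta> < L * ym - x0"
    and "\<And>t. 0 \<le> t \<Longrightarrow> Y t \<in> {ym<..<0}"
    and "\<And>t. 0 \<le> t \<Longrightarrow> crossing_level x0 (Y t) = exp (- \<eta> * (cA - c) * t)"
    and "\<And>t. 0 \<le> t \<Longrightarrow>
      cA * L / 2 * \<phi> (Y t) < d\<phi> (Y t) \<and> \<eta> < (lm + \<eta>) * exp (- lm * x0) * tilted (Y t)"
    and "\<And>t. 0 \<le> t \<Longrightarrow> (Y has_real_derivative dY t) (at t)"
    and "continuous_on {0..} dY"
proof -
  obtain ym x0 g where ym: "-R < ym" "ln S / \<eta> < L * ym - x0"
    and g: "\<And>w. w \<in> {0<..1} \<Longrightarrow> g w \<in> {ym<..<0} \<and> crossing_level x0 (g w) = w \<and>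
      cA * L / 2 * \<phi> (g w) < d\<phi> (g w) \<and> \<eta> < (lm + \<eta>) * exp (- lm * x0) * tilted (g w)"
    and g_deriv: "\<And>w. w \<in> {0<..1} \<Longrightarrow>
      (g has_real_derivative inverse (crossing_level_deriv x0 (g w))) (at w)"
    and g_deriv_cont: "continuous_on {0<..1} (\<lambda>w. inverse (crossing_level_deriv x0 (g w)))"
    using crossing_level_inverse by blast
  define w where "w t = exp (- \<eta> * (cA - c) * t)" for t
  have w: "w t \<in> {0<..1}" if "0 \<le> t" for t
    using \<eta>_pos speeds that by (simp add: w_def)
  show ?thesis
  proof (rule that[of ym x0 "g \<circ> w" "\<lambda>t. inverse (crossing_level_deriv x0 (g (w t))) * (- \<eta> * (cA - c) * w t)"])
    fix t :: real assume "0 \<le> t"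
    then show "(g \<circ> w) t \<in> {ym<..<0}" "crossing_level x0 ((g \<circ> w) t) = exp (- \<eta> * (cA - c) * t)"
      "cA * L / 2 * \<phi> ((g \<circ> w) t) < d\<phi> ((g \<circ> w) t) \<and>
        \<eta> < (lm + \<eta>) * exp (- lm * x0) * tilted ((g \<circ> w) t)"
      using g[OF w] by (auto simp: w_def)
    have "(w has_real_derivative - \<eta> * (cA - c) * w t) (at t)"
      unfolding w_def[abs_def] by (auto intro!: derivative_eq_intros)
    then show "(g \<circ> w has_real_derivative
        inverse (crossing_level_deriv x0 (g (w t))) * (- \<eta> * (cA - c) * w t)) (at t)"
      unfolding comp_def by (rule DERIV_chain2[where g = w, OF g_deriv[OF w[OF \<open>0 \<le> t\<close>]]])
  next
    have "continuous_on {0..} w"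
      unfolding w_def[abs_def] by (intro continuous_intros)
    then show "continuous_on {0..}
        (\<lambda>t. inverse (crossing_level_deriv x0 (g (w t))) * (- \<eta> * (cA - c) * w t))"
      using w by (intro continuous_intros continuous_on_compose2[OF g_deriv_cont]) auto
  qed (use ym in auto)
qed

theorem exists_crossing_curve:
  "\<exists>x0 X.
     (\<forall>t\<ge>0.
        Pfun r1 c \<eta> S x0 t (X t) = Qfun r1 c cA \<gamma> L \<phi> t (X t) \<and>
        (\<exists>\<delta>>0. \<forall>x. 0 < \<bar>x - X t\<bar> \<and> \<bar>x - X t\<bar> < \<delta> \<longrightarrow>
                  Pfun r1 c \<eta> S x0 t x \<noteq> Qfun r1 c cA \<gamma> L \<phi> t x) \<and>
        (\<exists>D. ((\<lambda>x. Pfun r1 c \<eta> S x0 t x) has_real_derivative D) (at (X t)) \<and> D < 0) \<and>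
        (\<exists>D. ((\<lambda>x. Qfun r1 c cA \<gamma> L \<phi> t x) has_real_derivative D) (at (X t)) \<and> D > 0) \<and>
        cA * t - R * L < X t \<and> X t < cA * t) \<and>
     (\<exists>b. ln S / \<eta> < b \<and> (\<forall>t\<ge>0. b \<le> X t - c * t - x0)) \<and>
     (\<exists>X'. (\<forall>t\<ge>0. (X has_real_derivative X' t) (at t within {0..})) \<and>
           continuous_on {0..} X' \<and> (\<forall>t\<ge>0. - R * L < X t)) \<and>
     (\<lambda>t. X t - cA * t) \<in> O[at_top](\<lambda>_. 1)"
proof -
  obtain ym x0 Y dY where ym: "-R < ym" "ln S / \<eta> < L * ym - x0"
    and Y: "\<And>t. 0 \<le> t \<Longrightarrow> Y t \<in> {ym<..<0}"
    and level: "\<And>t. 0 \<le> t \<Longrightarrow> crossing_level x0 (Y t) = exp (- \<eta> * (cA - c) * t)"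
    and steep: "\<And>t. 0 \<le> t \<Longrightarrow>
      cA * L / 2 * \<phi> (Y t) < d\<phi> (Y t) \<and> \<eta> < (lm + \<eta>) * exp (- lm * x0) * tilted (Y t)"
    and dY: "\<And>t. 0 \<le> t \<Longrightarrow> (Y has_real_derivative dY t) (at t)" "continuous_on {0..} dY"
    using crossing_curve_moving_frame by blast
  have Y_dom: "Y t \<in> {-R<..<0}" if "0 \<le> t" for t
    using Y[OF that] ym(1) by auto
  define X where "X t = cA * t + L * Y t" for t
  have bounds: "cA * t - R * L < X t" "X t < cA * t" "- R * L < X t" "L * ym - x0 \<le> X t - c * t - x0"
    if "0 \<le> t" for t
  proof -
    have "- (R * L) < L * Y t" "L * Y t < 0" "L * ym \<le> L * Y t"
      using Y_dom[OF that] Y[OF that] L_pos mult_strict_left_mono[of "-R" "Y t" L]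
      by (auto simp: mult.commute mult_pos_neg)
    moreover have "0 \<le> cA * t" "c * t \<le> cA * t"
      using c_pos speeds that by (auto intro: mult_right_mono)
    ultimately show "cA * t - R * L < X t" "X t < cA * t" "- R * L < X t" "L * ym - x0 \<le> X t - c * t - x0"
      by (auto simp: X_def)
  qed
  have "\<bar>X t - cA * t\<bar> \<le> R * L" if "0 \<le> t" for t
    using bounds(1,2)[OF that] by simp
  then have "(\<lambda>t. X t - cA * t) \<in> O[at_top](\<lambda>_. 1)"
    by (intro bigoI[where c = "R * L"] eventually_at_top_linorderI[of 0]) auto
  moreover have "(X has_real_derivative cA + L * dY t) (at t within {0..})" if "0 \<le> t" for t
  proof -
    have "(X has_real_derivative cA + L * dY t) (at t)"
      unfolding X_def[abs_def] using dY(1)[OF that] by (auto intro!: derivative_eq_intros)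
    then show ?thesis
      by (rule has_field_derivative_at_within)
  qed
  moreover have "continuous_on {0..} (\<lambda>t. cA + L * dY t)"
    using dY(2) by (intro continuous_intros)
  moreover note crossing_point[OF Y_dom level steep[THEN conjunct1] steep[THEN conjunct2], folded X_def]
  ultimately show ?thesis
    using ym bounds
    by (intro exI[of _ x0] exI[of _ X] conjI exI[of _ "L * ym - x0"] exI[of _ "\<lambda>t. cA + L * dY t"]) auto
qed

end

theorem lemma3p4:
  fixes r1 r2 r3 L cA c \<eta> S R \<gamma> lam1 :: real and \<phi> :: "real \<Rightarrow> real"
  assumes "r1 > 0" "r2 > 0" "r3 > 0" "L > 0"
    and "r2 > max r1 r3"
    and "cA > 2 * sqrt r1"
    and "2 * sqrt r1 < c" "c < cA"
    and "\<eta> > 0" "S > 0" "R > 1" "\<gamma> > 0"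
    and "principal_eigenfunction r1 r2 r3 L R lam1 \<phi>"
  shows "\<exists>x0 X.
     (\<forall>t\<ge>0.
        Pfun r1 c \<eta> S x0 t (X t) = Qfun r1 c cA \<gamma> L \<phi> t (X t) \<and>
        (\<exists>\<delta>>0. \<forall>x. 0 < \<bar>x - X t\<bar> \<and> \<bar>x - X t\<bar> < \<delta> \<longrightarrow>
                  Pfun r1 c \<eta> S x0 t x \<noteq> Qfun r1 c cA \<gamma> L \<phi> t x) \<and>
        (\<exists>D. ((\<lambda>x. Pfun r1 c \<eta> S x0 t x) has_real_derivative D) (at (X t)) \<and> D < 0) \<and>
        (\<exists>D. ((\<lambda>x. Qfun r1 c cA \<gamma> L \<phi> t x) has_real_derivative D) (at (X t)) \<and> D > 0) \<and>
        cA * t - R * L < X t \<and> X t < cA * t) \<and>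
     (\<exists>b. ln S / \<eta> < b \<and> (\<forall>t\<ge>0. b \<le> X t - c * t - x0)) \<and>
     (\<exists>X'. (\<forall>t\<ge>0. (X has_real_derivative X' t) (at t within {0..})) \<and>
           continuous_on {0..} X' \<and> (\<forall>t\<ge>0. - R * L < X t)) \<and>
     (\<lambda>t. X t - cA * t) \<in> O[at_top](\<lambda>_. 1)"
proof -
  from assms obtain d\<phi> where
    "\<And>y. y \<in> {-R<..<0} \<Longrightarrow> 0 < \<phi> y"
    "\<And>y. y \<in> {-R<..<0} \<Longrightarrow> (\<phi> has_real_derivative d\<phi> y) (at y)"
    "continuous_on {-R<..<0} d\<phi>" "(\<phi> \<longlongrightarrow> 0) (at_right (-R))"
    "filterlim (\<lambda>y. d\<phi> y / \<phi> y) at_top (at_right (-R))"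
    using principal_eigenfunction_left_branch[of r1 r2 r3 L R lam1 \<phi>] by auto
  moreover have "0 < c"
    using assms(1,7) real_sqrt_ge_zero[of r1] by linarith
  ultimately interpret front_crossing r1 c cA \<eta> S \<gamma> L R \<phi> d\<phi>
    using assms lam_pos[of r1 c] by unfold_locales auto
  show ?thesis
    by (rule exists_crossing_curve)
qed

end
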